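(* Let $f=\mathbb{E}_\xi[f_\xi]$ be convex and $L_{f/h}$-relatively smooth with respect to $h$, with minimizer $x^\star\in\operatorname{int}\operatorname{dom}h$ satisfying $\nabla f(x^\star)=0$. Suppose the noise assumption below holds with constant $\sigma^2$ and step size $\eta\le1/(2L_{f/h})$. Then the iterates of Bregman stochastic gradient descent with constant step size $\eta$ satisfy, for every $T\ge1$, $$\mathbb{E}\Big[\frac1T\sum_{t=0}^{T}D_f(x^\star,x_t)\Big]\le\frac{D_h(x^\star,x_0)}{\eta T}+\eta\sigma^2.$$
   Context: Let $C\subseteq\mathbb{R}^d$ be a closed convex set and $h:\mathbb{R}^d\to\mathbb{R}\cup\{+\infty\}$ a function satisfying the standing assumption: $h$ is twice continuously differentiable and strictly convex on $\operatorname{int} C$, and for every $y\in\mathbb{R}^d$ the problem $\min_{x\in C} h(x)-x^\top y$ has a unique solution, which lies in $\operatorname{int} C$. $h^*$ is the convex conjugate of $h$. For differentiable $\varphi$, $D_\varphi(x,y)=\varphi(x)-\varphi(y)-\nabla\varphi(y)^\top(x-y)$. A differentiable $f$ is $L$-relatively smooth w.r.t. $h$ if $D_f(x,y)\le L D_h(x,y)$ for all $x,y\in\operatorname{int}\operatorname{dom}h$. Bregman stochastic gradient descent (BSGD): given $x_0\in\operatorname{int}C$, $x_{t+1}=\arg\min_{x\in C}\{\eta g_t^\top x+D_h(x,x_t)\}$, equivalently $\nabla h(x_{t+1})=\nabla h(x_t)-\eta g_t$, where $g_t=\nabla f_{\xi_t}(x_t)$ and $\xi_t$ are drawn independently from the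 distribution of $\xi$. Noise assumption: every $f_\xi$ is convex and $L_{f/h}$-relatively smooth w.r.t. $h$, $\mathbb{E}_\xi[f_\xi]=f$, and there is $\sigma^2\ge0$ such that for all $t$, $\sigma^2\ge\frac{1}{2\eta^2}\mathbb{E}_{\xi_t}\big[D_{h^*}(\nabla h(x_t)-2\eta\nabla f_{\xi_t}(x^\star),\nabla h(x_t))\big]$. *)

theory Defs
  imports "HOL-Probability.Probability"
begin

definition grad :: "('a::euclidean_space \<Rightarrow> real) \<Rightarrow> 'a \<Rightarrow> 'a" where
  "grad \<phi> x = (THE g. (\<phi> has_derivative (\<lambda>v. inner g v)) (at x))"

definition bregman :: "('a::euclidean_space \<Rightarrow> real) \<Rightarrow> 'a \<Rightarrow> 'a \<Rightarrow> real" where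
  "bregman \<phi> x y = \<phi> x - \<phi> y - inner (grad \<phi> y) (x - y)"

definition strict_convex_on :: "'a::real_vector set \<Rightarrow> ('a \<Rightarrow> real) \<Rightarrow> bool" where
  "strict_convex_on S f \<longleftrightarrow>
     (\<forall>x\<in>S. \<forall>y\<in>S. x \<noteq> y \<longrightarrow> (\<forall>u::real. 0 < u \<longrightarrow> u < 1 \<longrightarrow>
        f ((1 - u) *\<^sub>R x + u *\<^sub>R y) < (1 - u) * f x + u * f y))"

definition fin :: "('a \<Rightarrow> ereal) \<Rightarrow> 'a \<Rightarrow> real" where
  "fin h x = real_of_ereal (h x)"

text \<open>Bregman divergence of an extended-real valued h, D_h(x,y), for y where h is
  finite and differentiable (x arbitrary; value +infinity where h x = +infinity).\<close>
definition bregman_e :: "('a::euclidean_space \<Rightarrow> ereal) \<Rightarrow> 'a \<Rightarrow> 'a \<Rightarrow> ereal" where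
  "bregman_e h x y = h x - ereal (fin h y + inner (grad (fin h) y) (x - y))"

definition conj :: "('a::euclidean_space \<Rightarrow> ereal) \<Rightarrow> 'a \<Rightarrow> ereal" where
  "conj h y = (SUP x. ereal (inner x y) - h x)"

definition bsgd_step :: "'a set \<Rightarrow> ('a::euclidean_space \<Rightarrow> ereal) \<Rightarrow> real \<Rightarrow> 'a \<Rightarrow> 'a \<Rightarrow> 'a" where
  "bsgd_step C h \<eta> g y = (THE x. x \<in> C \<and> (\<forall>z\<in>C.
      ereal (\<eta> * inner g x) + bregman_e h x y \<le> ereal (\<eta> * inner g z) + bregman_e h z y))"

primrec bsgd :: "'a set \<Rightarrow> ('a::euclidean_space \<Rightarrow> ereal) \<Rightarrow> real \<Rightarrow> ('b \<Rightarrow> 'a \<Rightarrow> real)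
    \<Rightarrow> 'a \<Rightarrow> (nat \<Rightarrow> 'b) \<Rightarrow> nat \<Rightarrow> 'a" where
  "bsgd C h \<eta> F x0 s 0 = x0"
| "bsgd C h \<eta> F x0 s (Suc t) =
     bsgd_step C h \<eta> (grad (F (s t)) (bsgd C h \<eta> F x0 s t)) (bsgd C h \<eta> F x0 s t)"

definition rel_smooth :: "('a::euclidean_space \<Rightarrow> real) \<Rightarrow> ('a \<Rightarrow> real) \<Rightarrow> real \<Rightarrow> 'a set \<Rightarrow> bool" where
  "rel_smooth f \<phi> L S \<longleftrightarrow> (\<forall>x\<in>S. \<forall>y\<in>S. bregman f x y \<le> L * bregman \<phi> x y)"

end

(* With x_{t+1} = grad h*(grad h x_t - eta g_t), the three-point identity gives
   D_h(xs,x_{t+1}) = D_h(xs,x_t) + D_h(x_t,x_{t+1}) - eta <g_t, x_t - xs>, and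
   D_h(x_t,x_{t+1}) = D_{h*}(grad h x_t - eta g_t, grad h x_t). Writing eta g_t as the midpoint of
   2 eta (g_t - grad f_xi xs) and 2 eta grad f_xi xs, convexity of h* splits this into half the
   noise term and a gradient-difference term, which relative smoothness with 2 eta L <= 1 bounds by
   2 eta D_{f_xi}(x_t,xs). Since xi_t is independent of x_t, taking expectations yields
   E D_h(xs,x_{t+1}) + eta E D_f(xs,x_t) <= E D_h(xs,x_t) + eta^2 sigma^2, which telescopes. *)

theory Submission
  imports Defs
begin

section \<open>Gradients and Bregman divergences of convex functions\<close>

lemma inner_functional_inj:
  fixes g1 g2 :: "'a::real_inner"
  assumes "(\<lambda>v. inner g1 v) = (\<lambda>v. inner g2 v)"
  shows "g1 = g2"
proof -
  have "inner g1 (g1 - g2) = inner g2 (g1 - g2)"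
    using assms by metis
  then have "inner (g1 - g2) (g1 - g2) = 0"
    by (simp add: inner_diff_left)
  then show ?thesis
    by simp
qed

lemma grad_has_derivative:
  fixes \<phi> :: "'a::euclidean_space \<Rightarrow> real"
  assumes "\<phi> differentiable (at x)"
  shows "(\<phi> has_derivative (\<lambda>v. inner (grad \<phi> x) v)) (at x)"
proof -
  obtain D where D: "(\<phi> has_derivative D) (at x)"
    using assms by (auto simp: differentiable_def)
  have "D = (\<lambda>v. inner (adjoint D 1) v)"
    using adjoint_works[OF has_derivative_linear[OF D]] by (auto simp: inner_commute)
  with D have "\<exists>g. (\<phi> has_derivative (\<lambda>v. inner g v)) (at x)"
    by metis
  moreover have "g1 = g2" if "(\<phi> has_derivative (\<lambda>v. inner g1 v)) (at x)"
    "(\<phi> has_derivative (\<lambda>v. inner g2 v)) (at x)" for g1 g2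
    using inner_functional_inj has_derivative_unique[OF that] by blast
  ultimately have "\<exists>!g. (\<phi> has_derivative (\<lambda>v. inner g v)) (at x)"
    by blast
  then show ?thesis
    unfolding grad_def by (rule theI')
qed

lemma grad_eqI:
  fixes \<phi> :: "'a::euclidean_space \<Rightarrow> real"
  assumes "(\<phi> has_derivative (\<lambda>v. inner g v)) (at x)"
  shows "grad \<phi> x = g"
proof -
  have "\<phi> differentiable (at x)"
    using assms by (auto simp: differentiable_def)
  then show ?thesis
    using inner_functional_inj has_derivative_unique[OF grad_has_derivative assms] by blast
qed

lemma grad_directional_tendsto:
  fixes \<phi> :: "'a::euclidean_space \<Rightarrow> real"
  assumes "\<phi> differentiable (at y)"
  shows "((\<lambda>t. (\<phi> (y + t *\<^sub>R v) - \<phi> y) / t) \<longlongrightarrow> inner (grad \<phi> y) v) (at_right 0)"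
proof -
  have "((\<lambda>t. \<phi> (y + t *\<^sub>R v)) has_derivative (\<lambda>t. inner (grad \<phi> y) (t *\<^sub>R v))) (at 0)"
  proof -
    have "((\<lambda>t. y + t *\<^sub>R v) has_derivative (\<lambda>t. t *\<^sub>R v)) (at 0)"
      by (auto intro!: derivative_eq_intros)
    moreover have "(\<phi> has_derivative (\<lambda>w. inner (grad \<phi> y) w)) (at (y + 0 *\<^sub>R v))"
      using grad_has_derivative[OF assms] by simp
    ultimately show ?thesis
      by (rule has_derivative_compose)
  qed
  then have "((\<lambda>t. \<phi> (y + t *\<^sub>R v)) has_real_derivative inner (grad \<phi> y) v) (at 0)"
    by (simp add: has_field_derivative_def mult.commute[of _ "inner (grad \<phi> y) v"])
  then have "((\<lambda>t. (\<phi> (y + t *\<^sub>R v) - \<phi> y) / t) \<longlongrightarrow> inner (grad \<phi> y) v) (at 0)"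
    by (simp add: has_field_derivative_iff)
  then show ?thesis
    using filterlim_at_split by blast
qed

lemma convex_on_grad_le:
  fixes \<phi> :: "'a::euclidean_space \<Rightarrow> real"
  assumes cv: "convex_on S \<phi>" and S: "y \<in> S" "z \<in> S" and d: "\<phi> differentiable (at y)"
  shows "\<phi> y + inner (grad \<phi> y) (z - y) \<le> \<phi> z"
proof -
  have "eventually (\<lambda>t. (\<phi> (y + t *\<^sub>R (z - y)) - \<phi> y) / t \<le> \<phi> z - \<phi> y) (at_right (0::real))"
  proof -
    have "eventually (\<lambda>t. t \<in> {0<..<1::real}) (at_right 0)"
      by (simp add: eventually_at_right_field) (auto intro!: exI[of _ 1])
    then show ?thesis
    proof eventually_elim
      case (elim t)
      have "\<phi> ((1 - t) *\<^sub>R y + t *\<^sub>R z) \<le> (1 - t) * \<phi> y + t * \<phi> z"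
        using elim cv S by (intro convex_onD) auto
      moreover have "y + t *\<^sub>R (z - y) = (1 - t) *\<^sub>R y + t *\<^sub>R z"
        by (simp add: algebra_simps)
      ultimately have "\<phi> (y + t *\<^sub>R (z - y)) - \<phi> y \<le> t * (\<phi> z - \<phi> y)"
        by (simp add: algebra_simps)
      then show ?case
        using elim by (simp add: divide_le_eq mult.commute)
    qed
  qed
  then have "inner (grad \<phi> y) (z - y) \<le> \<phi> z - \<phi> y"
    by (intro tendsto_upperbound[OF grad_directional_tendsto[OF d]]) simp_all
  then show ?thesis
    by simp
qed

lemma bregman_nonneg:
  fixes \<phi> :: "'a::euclidean_space \<Rightarrow> real"
  assumes "convex_on S \<phi>" "x \<in> S" "y \<in> S" "\<phi> differentiable (at y)"
  shows "0 \<le> bregman \<phi> x y"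
  using convex_on_grad_le[OF assms(1,3,2,4)] by (simp add: bregman_def)

lemma bregman_segment_le:
  fixes \<phi> :: "'a::euclidean_space \<Rightarrow> real"
  assumes "convex_on S \<phi>" "y \<in> S" "z \<in> S" "0 \<le> \<theta>" "\<theta> \<le> 1"
  shows "bregman \<phi> ((1 - \<theta>) *\<^sub>R y + \<theta> *\<^sub>R z) y \<le> \<theta> * bregman \<phi> z y"
proof -
  have "\<phi> ((1 - \<theta>) *\<^sub>R y + \<theta> *\<^sub>R z) \<le> (1 - \<theta>) * \<phi> y + \<theta> * \<phi> z"
    using assms by (intro convex_onD) auto
  moreover have "(1 - \<theta>) *\<^sub>R y + \<theta> *\<^sub>R z - y = \<theta> *\<^sub>R (z - y)"
    by (simp add: algebra_simps)
  ultimately show ?thesis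
    by (simp add: bregman_def algebra_simps)
qed

lemma eventually_line_in_open:
  fixes y w :: "'a::real_normed_vector"
  assumes "open S" "y \<in> S"
  shows "eventually (\<lambda>s. y + s *\<^sub>R w \<in> S) (nhds 0)"
proof -
  have "((\<lambda>s. y + s *\<^sub>R w) \<longlongrightarrow> y) (nhds 0)"
    by (auto intro!: tendsto_eq_intros filterlim_ident)
  then show ?thesis
    using assms by (rule topological_tendstoD)
qed

lemma measurable_continuous_on_comp_open:
  assumes "open S" "continuous_on S g" "X \<in> borel_measurable N"
    and "\<And>\<omega>. \<omega> \<in> space N \<Longrightarrow> X \<omega> \<in> S"
  shows "(\<lambda>\<omega>. g (X \<omega>)) \<in> borel_measurable N"
proof -
  have "(\<lambda>x. if x \<in> S then g x else undefined) \<in> borel_measurable borel"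
    using assms(1,2) by (intro borel_measurable_continuous_on_if) auto
  from measurable_compose[OF assms(3) this] show ?thesis
    by (rule measurable_cong[THEN iffD1, rotated]) (simp add: assms(4))
qed

section \<open>Measure-theoretic tools\<close>

lemma telescoping_ennreal:
  fixes a c :: "nat \<Rightarrow> ennreal"
  assumes "\<And>t. a (Suc t) + c t \<le> a t + d"
  shows "a n + (\<Sum>t<n. c t) \<le> a 0 + of_nat n * d"
proof (induction n)
  case (Suc n)
  have "a (Suc n) + (\<Sum>t<Suc n. c t) = (a (Suc n) + c n) + (\<Sum>t<n. c t)"
    by (simp add: ac_simps)
  also have "\<dots> \<le> (a n + d) + (\<Sum>t<n. c t)"
    by (rule add_right_mono[OF assms])
  also have "\<dots> = (a n + (\<Sum>t<n. c t)) + d"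
    by (simp add: ac_simps)
  also have "\<dots> \<le> (a 0 + of_nat n * d) + d"
    by (rule add_right_mono[OF Suc.IH])
  also have "\<dots> = a 0 + of_nat (Suc n) * d"
    by (simp add: algebra_simps)
  finally show ?case .
qed simp

lemma (in prob_space) nn_integral_plus_le_of_pointwise:
  fixes K N R :: "'a \<Rightarrow> real"
  assumes K: "K \<in> borel_measurable M" "\<And>b. 0 \<le> K b"
    and N: "N \<in> borel_measurable M" "\<And>b. 0 \<le> N b"
    and R: "integrable M R" "0 \<le> (\<integral>b. R b \<partial>M)"
    and D: "0 \<le> D" and c: "0 < c"
    and bound: "\<And>b. b \<in> space M \<Longrightarrow> K b \<le> D - R b + c * N b"
  shows "(\<integral>\<^sup>+b. K b \<partial>M) + ennreal (\<integral>b. R b \<partial>M) \<le> ennreal D + ennreal c * (\<integral>\<^sup>+b. N b \<partial>M)"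
proof (cases "(\<integral>\<^sup>+b. N b \<partial>M) = \<top>")
  case True
  then show ?thesis
    using c by (simp add: ennreal_mult_top)
next
  case False
  then obtain r where r: "(\<integral>\<^sup>+b. N b \<partial>M) = ennreal r" "0 \<le> r"
    using ennreal_cases[of "\<integral>\<^sup>+b. N b \<partial>M"] by auto
  have N_int: "integrable M N"
    by (rule integrableI_nn_integral_finite[OF N(1) _ r(1)]) (simp add: N(2))
  have "(\<integral>b. N b \<partial>M) = r"
    using nn_integral_eq_integral[OF N_int] r N(2) by simp
  have B_int: "integrable M (\<lambda>b. D - R b + c * N b)"
    using R(1) N_int by auto
  have K_int: "integrable M K"
    by (rule Bochner_Integration.integrable_bound[OF B_int K(1)])
      (use bound K(2) in \<open>force intro!: AE_I2\<close>)
  have "(\<integral>b. K b \<partial>M) \<le> (\<integral>b. D - R b + c * N b \<partial>M)"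
    by (rule integral_mono[OF K_int B_int bound])
  also have "\<dots> = D - (\<integral>b. R b \<partial>M) + c * r"
    using R(1) N_int \<open>(\<integral>b. N b \<partial>M) = r\<close> prob_space by simp
  finally have sum_le: "(\<integral>b. K b \<partial>M) + (\<integral>b. R b \<partial>M) \<le> D + c * r"
    by simp
  have "(\<integral>\<^sup>+b. K b \<partial>M) + ennreal (\<integral>b. R b \<partial>M) = ennreal ((\<integral>b. K b \<partial>M) + (\<integral>b. R b \<partial>M))"
    using nn_integral_eq_integral[OF K_int] K(2) R(2) by (simp add: ennreal_plus integral_nonneg)
  also have "\<dots> \<le> ennreal (D + c * r)"
    by (rule ennreal_leI[OF sum_le])
  also have "\<dots> = ennreal D + ennreal c * (\<integral>\<^sup>+b. N b \<partial>M)"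
    using D c r by (simp add: ennreal_plus ennreal_mult)
  finally show ?thesis .
qed

lemma (in prob_space) nn_integral_next_sample:
  fixes \<xi> :: "nat \<Rightarrow> 'a \<Rightarrow> 'b"
  assumes M: "prob_space N"
    and \<xi>: "\<And>i. \<xi> i \<in> measurable M N" "distr M N (\<xi> t) = N"
    and indep: "indep_vars (\<lambda>_. N) \<xi> UNIV"
    and K: "K \<in> borel_measurable (PiM {..<t} (\<lambda>_. N) \<Otimes>\<^sub>M N)"
  shows "(\<integral>\<^sup>+\<omega>. K (\<lambda>i\<in>{..<t}. \<xi> i \<omega>, \<xi> t \<omega>) \<partial>M)
       = (\<integral>\<^sup>+\<omega>. (\<integral>\<^sup>+b. K (\<lambda>i\<in>{..<t}. \<xi> i \<omega>, b) \<partial>N) \<partial>M)"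
proof -
  interpret N: prob_space N by (rule M)
  define Y where "Y \<omega> = (\<lambda>i\<in>{..<t}. \<xi> i \<omega>)" for \<omega>
  define Z where "Z \<omega> = (\<lambda>i\<in>{t}. \<xi> i \<omega>)" for \<omega>
  let ?MY = "PiM {..<t} (\<lambda>_. N)" and ?MZ = "PiM {t} (\<lambda>_. N)"
  define K' where "K' p = K (fst p, snd p t)" for p
  have Y: "Y \<in> measurable M ?MY" and Z: "Z \<in> measurable M ?MZ"
    unfolding Y_def Z_def by (auto intro!: measurable_restrict simp: \<xi>)
  interpret Z: prob_space "distr M ?MZ Z"
    by (rule prob_space_distr[OF Z])
  have eval: "(\<lambda>z. z t) \<in> measurable ?MZ N"
    by (rule measurable_component_singleton) simp
  have "(\<lambda>p. (fst p, snd p t)) \<in> measurable (?MY \<Otimes>\<^sub>M ?MZ) (?MY \<Otimes>\<^sub>M N)"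
    using eval by (intro measurable_Pair) (auto intro: measurable_compose[OF measurable_snd])
  from measurable_compose[OF this K] have K': "K' \<in> borel_measurable (?MY \<Otimes>\<^sub>M ?MZ)"
    by (simp add: K'_def[abs_def])
  have indep_YZ: "indep_var ?MY Y ?MZ Z"
    unfolding Y_def Z_def by (rule indep_var_restrict[OF indep]) auto
  have joint: "distr M ?MY Y \<Otimes>\<^sub>M distr M ?MZ Z = distr M (?MY \<Otimes>\<^sub>M ?MZ) (\<lambda>\<omega>. (Y \<omega>, Z \<omega>))"
    using indep_var_distribution_eq[THEN iffD1, OF indep_YZ] by simp
  have "sets (distr M ?MY Y \<Otimes>\<^sub>M distr M ?MZ Z) = sets (?MY \<Otimes>\<^sub>M ?MZ)"
    by (intro sets_pair_measure_cong) auto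
  with K' have K'_sets: "K' \<in> borel_measurable (distr M ?MY Y \<Otimes>\<^sub>M distr M ?MZ Z)"
    using measurable_cong_sets by blast
  have inner: "(\<integral>\<^sup>+z. K' (s, z) \<partial>distr M ?MZ Z) = (\<integral>\<^sup>+b. K (s, b) \<partial>N)"
    if "s \<in> space ?MY" for s
  proof -
    have Ks: "(\<lambda>b. K (s, b)) \<in> borel_measurable N"
      using K that by (rule measurable_compose_Pair1[rotated])
    have "(\<integral>\<^sup>+z. K' (s, z) \<partial>distr M ?MZ Z) = (\<integral>\<^sup>+\<omega>. K (s, \<xi> t \<omega>) \<partial>M)"
      using Z Ks eval by (subst nn_integral_distr) (auto simp: K'_def Z_def)
    also have "\<dots> = (\<integral>\<^sup>+b. K (s, b) \<partial>distr M N (\<xi> t))"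
      using Ks \<xi>(1) by (intro nn_integral_distr[symmetric]) auto
    finally show ?thesis
      unfolding \<xi>(2) .
  qed
  have "(\<integral>\<^sup>+\<omega>. K (Y \<omega>, \<xi> t \<omega>) \<partial>M) = (\<integral>\<^sup>+\<omega>. K' (Y \<omega>, Z \<omega>) \<partial>M)"
    by (simp add: K'_def Z_def)
  also have "\<dots> = (\<integral>\<^sup>+p. K' p \<partial>distr M (?MY \<Otimes>\<^sub>M ?MZ) (\<lambda>\<omega>. (Y \<omega>, Z \<omega>)))"
    using Y Z K' by (intro nn_integral_distr[symmetric]) auto
  also have "\<dots> = (\<integral>\<^sup>+s. (\<integral>\<^sup>+z. K' (s, z) \<partial>distr M ?MZ Z) \<partial>distr M ?MY Y)"
    unfolding joint[symmetric] by (rule Z.nn_integral_fst[symmetric, OF K'_sets])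
  also have "\<dots> = (\<integral>\<^sup>+s. (\<integral>\<^sup>+b. K (s, b) \<partial>N) \<partial>distr M ?MY Y)"
    by (intro nn_integral_cong) (simp add: inner)
  also have "\<dots> = (\<integral>\<^sup>+\<omega>. (\<integral>\<^sup>+b. K (Y \<omega>, b) \<partial>N) \<partial>M)"
    using Y K by (intro nn_integral_distr) (auto intro: N.borel_measurable_nn_integral_fst)
  finally show ?thesis
    unfolding Y_def .
qed

section \<open>The mirror map\<close>

locale legendre_mirror =
  fixes C :: "'a::euclidean_space set" and h :: "'a \<Rightarrow> ereal"
  assumes C: "convex C"
    and h_ninf: "\<forall>x. h x \<noteq> -\<infinity>"
    and h_dom: "\<forall>x. x \<notin> C \<longrightarrow> h x = \<infinity>"
    and h_fin: "\<forall>x\<in>interior C. h x \<noteq> \<infinity>"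
    and h_C1: "\<forall>x\<in>interior C. fin h differentiable (at x)"
    and h_C2: "\<exists>H :: 'a \<Rightarrow> 'a \<Rightarrow>\<^sub>L 'a. (\<forall>x\<in>interior C.
                 (grad (fin h) has_derivative blinfun_apply (H x)) (at x))
               \<and> continuous_on (interior C) H"
    and h_strict: "strict_convex_on (interior C) (fin h)"
    and h_argmin: "\<forall>y. \<exists>!x. x \<in> C \<and> (\<forall>z\<in>C. h x - ereal (inner x y) \<le> h z - ereal (inner z y))"
    and h_argmin_int: "\<forall>y x. x \<in> C \<and> (\<forall>z\<in>C. h x - ereal (inner x y) \<le> h z - ereal (inner z y))
                              \<longrightarrow> x \<in> interior C"
begin

(* mirror u = grad h*(u), the unique minimiser of h - <_, u>; hconj is h* as a real function. *)
definition mirror :: "'a \<Rightarrow> 'a" where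
  "mirror u = (THE x. x \<in> C \<and> (\<forall>z\<in>C. h x - ereal (inner x u) \<le> h z - ereal (inner z u)))"

definition hconj :: "'a \<Rightarrow> real" where
  "hconj u = inner (mirror u) u - fin h (mirror u)"

lemma mirror_argmin:
  "mirror u \<in> C \<and> (\<forall>z\<in>C. h (mirror u) - ereal (inner (mirror u) u) \<le> h z - ereal (inner z u))"
  unfolding mirror_def by (rule theI') (use h_argmin in blast)

lemma mirror_in_interior: "mirror u \<in> interior C"
  using mirror_argmin h_argmin_int by blast

lemma mirror_unique:
  assumes "x \<in> C" "\<forall>z\<in>C. h x - ereal (inner x u) \<le> h z - ereal (inner z u)"
  shows "mirror u = x"
  using assms mirror_argmin h_argmin by blast

lemma h_eq_fin: "x \<in> interior C \<Longrightarrow> h x = ereal (fin h x)"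
  using h_fin h_ninf unfolding fin_def by (cases "h x") auto

lemma fin_h_mirror_le:
  assumes "z \<in> interior C"
  shows "fin h (mirror u) - inner (mirror u) u \<le> fin h z - inner z u"
proof -
  have "h (mirror u) - ereal (inner (mirror u) u) \<le> h z - ereal (inner z u)"
    using mirror_argmin assms interior_subset by blast
  then show ?thesis
    using h_eq_fin[OF assms] h_eq_fin[OF mirror_in_interior] by simp
qed

lemma mirror_eqI:
  assumes "x \<in> interior C" "fin h x - inner x u = fin h (mirror u) - inner (mirror u) u"
  shows "mirror u = x"
proof (rule mirror_unique)
  show "x \<in> C"
    using assms(1) interior_subset by blast
  show "\<forall>z\<in>C. h x - ereal (inner x u) \<le> h z - ereal (inner z u)"
    using mirror_argmin assms h_eq_fin[OF assms(1)] h_eq_fin[OF mirror_in_interior] by simp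
qed

lemma has_derivative_fin_h:
  "x \<in> interior C \<Longrightarrow> (fin h has_derivative (\<lambda>v. inner (grad (fin h) x) v)) (at x)"
  using h_C1 grad_has_derivative by blast

lemma continuous_on_fin_h: "continuous_on (interior C) (fin h)"
  using has_derivative_fin_h has_derivative_continuous continuous_at_imp_continuous_on by blast

lemma continuous_on_grad_fin_h: "continuous_on (interior C) (grad (fin h))"
  using h_C2 has_derivative_continuous continuous_at_imp_continuous_on by blast

lemma convex_on_fin_h: "convex_on (interior C) (fin h)"
proof (rule convex_onI)
  show "convex (interior C)"
    using C convex_interior by blast
  fix t :: real and x y
  assume "0 < t" "t < 1" "x \<in> interior C" "y \<in> interior C"
  then show "fin h ((1 - t) *\<^sub>R x + t *\<^sub>R y) \<le> (1 - t) * fin h x + t * fin h y"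
    using h_strict unfolding strict_convex_on_def
    by (cases "x = y") (force simp: algebra_simps)+
qed

lemma bregman_fin_h_nonneg: "x \<in> interior C \<Longrightarrow> y \<in> interior C \<Longrightarrow> 0 \<le> bregman (fin h) x y"
  using bregman_nonneg[OF convex_on_fin_h] h_C1 by blast

lemma grad_fin_h_mirror: "grad (fin h) (mirror u) = u"
proof -
  let ?x = "mirror u"
  have "((\<lambda>z. fin h z - inner z u) has_derivative (\<lambda>v. inner (grad (fin h) ?x) v - inner v u)) (at ?x)"
    using has_derivative_fin_h[OF mirror_in_interior] by (auto intro!: derivative_eq_intros)
  moreover have "eventually (\<lambda>z. z \<in> interior C) (at ?x)"
    using mirror_in_interior eventually_at_topological by blast
  then have "eventually (\<lambda>z. fin h ?x - inner ?x u \<le> fin h z - inner z u) (at ?x)"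
    by eventually_elim (rule fin_h_mirror_le)
  ultimately have "(\<lambda>v. inner (grad (fin h) ?x) v - inner v u) = (\<lambda>v. 0)"
    by (rule has_derivative_local_min)
  then have "(\<lambda>v. inner (grad (fin h) ?x) v) = (\<lambda>v. inner u v)"
    by (simp add: fun_eq_iff inner_commute)
  then show ?thesis
    by (rule inner_functional_inj)
qed

lemma mirror_grad_fin_h:
  assumes x: "x \<in> interior C"
  shows "mirror (grad (fin h) x) = x"
proof (rule mirror_eqI[OF x])
  let ?g = "grad (fin h) x"
  have "fin h x + inner ?g (mirror ?g - x) \<le> fin h (mirror ?g)"
    using convex_on_grad_le[OF convex_on_fin_h x mirror_in_interior] h_C1 x by blast
  with fin_h_mirror_le[OF x, of ?g]
  show "fin h x - inner x ?g = fin h (mirror ?g) - inner (mirror ?g) ?g"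
    by (simp add: inner_diff_right inner_commute)
qed

lemma hconj_ge: "z \<in> interior C \<Longrightarrow> inner z u - fin h z \<le> hconj u"
  using fin_h_mirror_le[of z u] unfolding hconj_def by (simp add: inner_commute)

lemma conj_eq_hconj: "real_of_ereal (conj h u) = hconj u"
proof -
  have "(SUP x. ereal (inner x u) - h x) = ereal (hconj u)"
  proof (rule antisym)
    show "(SUP x. ereal (inner x u) - h x) \<le> ereal (hconj u)"
    proof (rule SUP_least)
      fix x
      show "ereal (inner x u) - h x \<le> ereal (hconj u)"
      proof (cases "x \<in> C \<and> h x \<noteq> \<infinity>")
        case True
        then obtain r where r: "h x = ereal r"
          using h_ninf by (cases "h x") auto
        have "h (mirror u) - ereal (inner (mirror u) u) \<le> h x - ereal (inner x u)"
          using mirror_argmin True by blast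
        then show ?thesis
          using r h_eq_fin[OF mirror_in_interior] by (simp add: hconj_def)
      next
        case False
        then have "h x = \<infinity>"
          using h_dom by blast
        then show ?thesis
          by simp
      qed
    qed
    have "ereal (hconj u) = ereal (inner (mirror u) u) - h (mirror u)"
      using h_eq_fin[OF mirror_in_interior] by (simp add: hconj_def)
    then show "ereal (hconj u) \<le> (SUP x. ereal (inner x u) - h x)"
      using SUP_upper[of "mirror u" UNIV "\<lambda>x. ereal (inner x u) - h x"] by simp
  qed
  then show ?thesis
    by (simp add: conj_def)
qed

lemma bregman_fin_h_mirror_pos:
  assumes "z \<in> interior C" "z \<noteq> mirror u"
  shows "0 < bregman (fin h) z (mirror u)"
proof -
  have "bregman (fin h) z (mirror u) \<noteq> 0"
  proof
    assume "bregman (fin h) z (mirror u) = 0"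
    then have "fin h z - inner z u = fin h (mirror u) - inner (mirror u) u"
      by (simp add: bregman_def grad_fin_h_mirror inner_diff_right inner_commute)
    then show False
      using mirror_eqI[OF assms(1)] assms(2) by metis
  qed
  then show ?thesis
    using bregman_fin_h_nonneg[OF assms(1) mirror_in_interior[of u]] by simp
qed

lemma bregman_fin_h_mirror_le:
  "bregman (fin h) (mirror u) (mirror u0) \<le> inner (mirror u - mirror u0) (u - u0)"
  using fin_h_mirror_le[of "mirror u0" u] mirror_in_interior[of u0]
  by (simp add: bregman_def grad_fin_h_mirror inner_diff_left inner_diff_right inner_commute)

(* On the sphere of radius eps, D_h(_, mirror u0) has a positive minimum m; convexity in the first
   argument carries it outward, whereas D_h(mirror u, mirror u0) <= |mirror u - mirror u0| |u - u0|. *)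
lemma mirror_local_bound:
  assumes \<epsilon>: "0 < \<epsilon>" and ball: "cball (mirror u0) \<epsilon> \<subseteq> interior C"
  obtains d where "0 < d" "\<And>u. dist u u0 < d \<Longrightarrow> dist (mirror u) (mirror u0) < \<epsilon>"
proof -
  let ?x = "mirror u0" and ?S = "sphere (mirror u0) \<epsilon>"
  have S: "?S \<subseteq> interior C"
    using ball sphere_cball by blast
  have "continuous_on ?S (\<lambda>z. bregman (fin h) z ?x)"
    unfolding bregman_def using continuous_on_subset[OF continuous_on_fin_h S]
    by (intro continuous_intros) auto
  then obtain zm where zm: "zm \<in> ?S" "\<forall>z\<in>?S. bregman (fin h) zm ?x \<le> bregman (fin h) z ?x"
    using continuous_attains_inf[of ?S "\<lambda>z. bregman (fin h) z ?x"] \<epsilon> by auto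
  define m where "m = bregman (fin h) zm ?x"
  have m: "0 < m"
    unfolding m_def using zm(1) S \<epsilon> by (intro bregman_fin_h_mirror_pos) auto
  have "dist (mirror u) ?x < \<epsilon>" if du: "dist u u0 < m / \<epsilon>" for u
  proof (rule ccontr)
    define n where "n = norm (mirror u - ?x)"
    assume "\<not> dist (mirror u) ?x < \<epsilon>"
    then have n: "\<epsilon> \<le> n" "0 < n"
      using \<epsilon> by (auto simp: n_def dist_norm)
    define \<theta> where "\<theta> = \<epsilon> / n"
    have \<theta>: "0 < \<theta>" "\<theta> \<le> 1"
      using n \<epsilon> by (auto simp: \<theta>_def)
    define w where "w = (1 - \<theta>) *\<^sub>R ?x + \<theta> *\<^sub>R mirror u"
    have "w - ?x = \<theta> *\<^sub>R (mirror u - ?x)"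
      by (simp add: w_def algebra_simps)
    then have "w \<in> ?S"
      using \<theta> n \<epsilon> by (simp add: \<theta>_def n_def dist_norm norm_minus_commute)
    then have "m \<le> bregman (fin h) w ?x"
      using zm(2) by (simp add: m_def)
    also have "\<dots> \<le> \<theta> * bregman (fin h) (mirror u) ?x"
      unfolding w_def using \<theta> mirror_in_interior
      by (intro bregman_segment_le[OF convex_on_fin_h]) auto
    also have "\<dots> \<le> \<theta> * (n * norm (u - u0))"
      using bregman_fin_h_mirror_le[of u u0] norm_cauchy_schwarz[of "mirror u - ?x" "u - u0"] \<theta>
      by (intro mult_left_mono) (auto simp: n_def)
    also have "\<dots> < \<theta> * (n * (m / \<epsilon>))"
      using du n \<theta> by (intro mult_strict_left_mono) (auto simp: dist_norm)
    also have "\<dots> = m"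
      using n \<epsilon> by (simp add: \<theta>_def)
    finally show False
      by simp
  qed
  then show ?thesis
    using that m \<epsilon> by (metis divide_pos_pos)
qed

lemma continuous_mirror: "continuous_on UNIV mirror"
  unfolding continuous_on_iff
proof (intro ballI allI impI)
  fix u0 :: 'a and e :: real
  assume "0 < e"
  obtain r where r: "0 < r" "ball (mirror u0) r \<subseteq> interior C"
    using mirror_in_interior open_contains_ball[of "interior C"] by blast
  define \<epsilon> where "\<epsilon> = min e r / 2"
  have "0 < \<epsilon>" "\<epsilon> \<le> e" "cball (mirror u0) \<epsilon> \<subseteq> interior C"
    using \<open>0 < e\<close> r by (auto simp: \<epsilon>_def mem_cball mem_ball)
  then show "\<exists>d>0. \<forall>u\<in>UNIV. dist u u0 < d \<longrightarrow> dist (mirror u) (mirror u0) < e"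
    using mirror_local_bound[of \<epsilon> u0] by (metis UNIV_I order_less_le_trans)
qed

lemma has_derivative_hconj: "(hconj has_derivative (\<lambda>v. inner (mirror u) v)) (at u)"
  unfolding has_derivative_iff_norm
proof
  show "bounded_linear (\<lambda>v. inner (mirror u) v)"
    by (rule bounded_linear_inner_right)
  have bound: "norm (norm (hconj v - hconj u - inner (mirror u) (v - u)) / norm (v - u))
      \<le> norm (mirror v - mirror u)" for v
  proof (cases "v = u")
    case False
    have "0 \<le> hconj v - hconj u - inner (mirror u) (v - u)"
      using hconj_ge[OF mirror_in_interior, of u v] by (simp add: hconj_def inner_diff_right)
    moreover have "hconj v - hconj u - inner (mirror u) (v - u) \<le> inner (mirror v - mirror u) (v - u)"
      using hconj_ge[OF mirror_in_interior, of v u] by (simp add: hconj_def inner_diff_right inner_diff_left)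
    ultimately have "norm (hconj v - hconj u - inner (mirror u) (v - u)) \<le> norm (mirror v - mirror u) * norm (v - u)"
      using norm_cauchy_schwarz[of "mirror v - mirror u" "v - u"] by simp
    then show ?thesis
      using False by (simp add: divide_le_eq)
  qed simp
  have "isCont mirror u"
    using continuous_mirror continuous_on_eq_continuous_at by blast
  then have "((\<lambda>v. norm (mirror v - mirror u)) \<longlongrightarrow> 0) (at u)"
    by (intro tendsto_norm_zero LIM_zero) (simp add: isCont_def)
  then show "((\<lambda>v. norm (hconj v - hconj u - inner (mirror u) (v - u)) / norm (v - u)) \<longlongrightarrow> 0) (at u)"
    by (rule Lim_null_comparison[rotated]) (use bound in \<open>intro always_eventually allI, blast\<close>)
qed

lemma grad_hconj: "grad hconj u = mirror u"
  by (rule grad_eqI[OF has_derivative_hconj])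

lemma continuous_hconj: "continuous_on UNIV hconj"
  using has_derivative_hconj has_derivative_continuous continuous_at_imp_continuous_on by blast

lemma conj_h_eq_hconj: "(\<lambda>y. real_of_ereal (conj h y)) = hconj"
  by (simp add: fun_eq_iff conj_eq_hconj)

lemma bregman_hconj_eq:
  assumes "x \<in> interior C"
  shows "bregman hconj v (grad (fin h) x) = bregman (fin h) x (mirror v)"
  using mirror_grad_fin_h[OF assms]
  by (simp add: bregman_def grad_hconj grad_fin_h_mirror hconj_def inner_diff_left inner_diff_right inner_commute)

lemma bregman_hconj_midpoint_le:
  "bregman hconj ((1/2) *\<^sub>R (a + b)) y \<le> (1/2) * bregman hconj a y + (1/2) * bregman hconj b y"
proof -
  let ?m = "(1/2) *\<^sub>R (a + b)"
  have "hconj ?m = (1/2) * (inner (mirror ?m) a - fin h (mirror ?m)) + (1/2) * (inner (mirror ?m) b - fin h (mirror ?m))"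
    unfolding hconj_def by (simp add: inner_add_right algebra_simps)
  also have "\<dots> \<le> (1/2) * hconj a + (1/2) * hconj b"
    using hconj_ge[OF mirror_in_interior, of ?m a] hconj_ge[OF mirror_in_interior, of ?m b]
    by (intro add_mono mult_left_mono) auto
  finally show ?thesis
    by (simp add: bregman_def inner_add_right inner_diff_right algebra_simps)
qed

lemma bregman_three_point:
  assumes "x \<in> interior C"
  shows "bregman (fin h) xs (mirror (grad (fin h) x - \<eta> *\<^sub>R g))
       = bregman (fin h) xs x + bregman (fin h) x (mirror (grad (fin h) x - \<eta> *\<^sub>R g)) - \<eta> * inner g (x - xs)"
  by (simp add: bregman_def grad_fin_h_mirror inner_diff_left inner_diff_right algebra_simps)

(* With z = mirror of the first argument, D_h(x,z) + D_h(z,x) = 2 eta <grad phi x - grad phi xs, x - z>,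
   and relative smoothness with 2 eta L <= 1 absorbs D_h(z,x). *)
lemma bregman_hconj_gradient_gap_le:
  fixes \<phi> :: "'a \<Rightarrow> real"
  assumes cv: "convex_on (interior C) \<phi>" and df: "\<forall>x\<in>interior C. \<phi> differentiable (at x)"
    and sm: "rel_smooth \<phi> (fin h) L (interior C)" and \<eta>: "0 \<le> \<eta>" "2 * \<eta> * L \<le> 1"
    and x: "x \<in> interior C" and xs: "xs \<in> interior C"
  shows "bregman hconj (grad (fin h) x - (2 * \<eta>) *\<^sub>R (grad \<phi> x - grad \<phi> xs)) (grad (fin h) x)
       \<le> 2 * \<eta> * bregman \<phi> x xs"
proof -
  define a where "a = grad (fin h) x - (2 * \<eta>) *\<^sub>R (grad \<phi> x - grad \<phi> xs)"
  define z where "z = mirror a"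
  have z: "z \<in> interior C" and grad_z: "grad (fin h) z = a"
    by (simp_all add: z_def mirror_in_interior grad_fin_h_mirror)
  have sum_eq: "bregman (fin h) x z + bregman (fin h) z x = 2 * \<eta> * inner (grad \<phi> x - grad \<phi> xs) (x - z)"
    by (simp add: bregman_def grad_z a_def inner_diff_left inner_diff_right algebra_simps)
  have "\<phi> z - \<phi> x - inner (grad \<phi> x) (z - x) \<le> L * bregman (fin h) z x"
    using sm z x unfolding rel_smooth_def bregman_def by blast
  moreover have "\<phi> xs + inner (grad \<phi> xs) (z - xs) \<le> \<phi> z"
    using convex_on_grad_le[OF cv xs z] df xs by blast
  ultimately have "inner (grad \<phi> x - grad \<phi> xs) (x - z) \<le> bregman \<phi> x xs + L * bregman (fin h) z x"
    by (simp add: bregman_def inner_diff_left inner_diff_right algebra_simps)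
  then have "2 * \<eta> * inner (grad \<phi> x - grad \<phi> xs) (x - z) \<le> 2 * \<eta> * (bregman \<phi> x xs + L * bregman (fin h) z x)"
    using \<eta>(1) by (intro mult_left_mono) auto
  moreover have "2 * \<eta> * L * bregman (fin h) z x \<le> bregman (fin h) z x"
    using \<eta>(2) bregman_fin_h_nonneg[OF z x] mult_right_mono by fastforce
  moreover have "bregman hconj a (grad (fin h) x) = bregman (fin h) x z"
    unfolding z_def by (rule bregman_hconj_eq[OF x])
  ultimately show ?thesis
    using sum_eq by (simp add: a_def algebra_simps)
qed

(* eta grad phi x is the midpoint of 2 eta (grad phi x - grad phi xs) and 2 eta grad phi xs. *)
lemma mirror_step_descent:
  fixes \<phi> :: "'a \<Rightarrow> real"
  assumes cv: "convex_on (interior C) \<phi>" and df: "\<forall>x\<in>interior C. \<phi> differentiable (at x)"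
    and sm: "rel_smooth \<phi> (fin h) L (interior C)" and \<eta>: "0 \<le> \<eta>" "2 * \<eta> * L \<le> 1"
    and x: "x \<in> interior C" and xs: "xs \<in> interior C"
  shows "bregman (fin h) xs (mirror (grad (fin h) x - \<eta> *\<^sub>R grad \<phi> x))
       \<le> bregman (fin h) xs x - \<eta> * bregman \<phi> xs x - \<eta> * inner (grad \<phi> xs) (x - xs)
         + (1/2) * bregman hconj (grad (fin h) x - (2 * \<eta>) *\<^sub>R grad \<phi> xs) (grad (fin h) x)"
proof -
  let ?y = "grad (fin h) x" and ?g = "grad \<phi> x" and ?gs = "grad \<phi> xs"
  let ?a = "?y - (2 * \<eta>) *\<^sub>R (?g - ?gs)" and ?b = "?y - (2 * \<eta>) *\<^sub>R ?gs"
  have half: "(1/2::real) *\<^sub>R v + (1/2) *\<^sub>R v = v" for v :: 'a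
    by (simp flip: scaleR_add_left)
  have "(1/2) *\<^sub>R (?a + ?b) = ?y - \<eta> *\<^sub>R ?g"
    by (simp add: algebra_simps half)
  then have "bregman (fin h) x (mirror (?y - \<eta> *\<^sub>R ?g)) \<le> (1/2) * bregman hconj ?a ?y + (1/2) * bregman hconj ?b ?y"
    using bregman_hconj_midpoint_le[of ?a ?b ?y] bregman_hconj_eq[OF x, of "?y - \<eta> *\<^sub>R ?g"] by simp
  also have "\<dots> \<le> \<eta> * bregman \<phi> x xs + (1/2) * bregman hconj ?b ?y"
    using bregman_hconj_gradient_gap_le[OF assms] by simp
  finally have "bregman (fin h) xs (mirror (?y - \<eta> *\<^sub>R ?g))
      \<le> bregman (fin h) xs x + \<eta> * (bregman \<phi> x xs - inner ?g (x - xs)) + (1/2) * bregman hconj ?b ?y"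
    using bregman_three_point[OF x, of xs \<eta> ?g] by (simp add: algebra_simps)
  moreover have "\<eta> * (bregman \<phi> x xs - inner ?g (x - xs)) = - \<eta> * bregman \<phi> xs x - \<eta> * inner ?gs (x - xs)"
    by (simp add: bregman_def inner_diff_left inner_diff_right algebra_simps)
  ultimately show ?thesis
    by linarith
qed

lemma bsgd_step_eq_mirror: "bsgd_step C h \<eta> g y = mirror (grad (fin h) y - \<eta> *\<^sub>R g)"
proof -
  let ?u = "grad (fin h) y - \<eta> *\<^sub>R g"
  have eq: "(ereal (\<eta> * inner g x) + bregman_e h x y \<le> ereal (\<eta> * inner g z) + bregman_e h z y) \<longleftrightarrow>
        (h x - ereal (inner x ?u) \<le> h z - ereal (inner z ?u))" for x z
    using h_ninf
    by (cases "h x"; cases "h z")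
       (auto simp: bregman_e_def inner_diff_right inner_diff_left algebra_simps inner_commute)
  show ?thesis
    unfolding bsgd_step_def mirror_def eq ..
qed

end

section \<open>Stochastic gradients and the iterates\<close>

locale bsgd_setting = legendre_mirror C h + M: prob_space M
  for C :: "'a::euclidean_space set" and h and M :: "'b measure" +
  fixes F :: "'b \<Rightarrow> 'a \<Rightarrow> real" and f :: "'a \<Rightarrow> real" and xs x0 :: 'a and L \<eta> :: real
  assumes F_meas: "(\<lambda>p. grad (F (fst p)) (snd p)) \<in> borel_measurable (M \<Otimes>\<^sub>M borel)"
    and F_diff: "\<forall>b\<in>space M. \<forall>x\<in>interior C. F b differentiable (at x)"
    and F_convex: "\<forall>b\<in>space M. convex_on (interior C) (F b)"
    and F_smooth: "\<forall>b\<in>space M. rel_smooth (F b) (fin h) L (interior C)"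
    and F_mean: "\<forall>x\<in>interior C. integrable M (\<lambda>b. F b x) \<and> f x = (\<integral>b. F b x \<partial>M)"
    and f_diff: "\<forall>x\<in>interior C. f differentiable (at x)"
    and f_convex: "convex_on (interior C) f"
    and f_smooth: "rel_smooth f (fin h) L (interior C)"
    and xs: "xs \<in> interior C" "grad f xs = 0"
    and x0: "x0 \<in> interior C"
    and \<eta>: "0 < \<eta>" "2 * \<eta> * L \<le> 1"
begin

lemma measurable_grad_F [measurable]: "(\<lambda>b. grad (F b) y) \<in> borel_measurable M"
proof -
  have "(\<lambda>b. (b, y)) \<in> measurable M (M \<Otimes>\<^sub>M borel)"
    by measurable
  from measurable_compose[OF this F_meas] show ?thesis
    by simp
qed

lemma inner_grad_F_le_diff:
  assumes b: "b \<in> space M" and y: "y \<in> interior C" "y + s *\<^sub>R w \<in> interior C"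
  shows "s * inner (grad (F b) y) w \<le> F b (y + s *\<^sub>R w) - F b y"
  using convex_on_grad_le[of _ "F b", OF _ y] F_convex F_diff b y by auto

lemma integrable_inner_grad_F:
  assumes y: "y \<in> interior C"
  shows "integrable M (\<lambda>b. inner (grad (F b) y) w)"
proof -
  obtain s where s: "0 < s" "y + s *\<^sub>R w \<in> interior C" "y - s *\<^sub>R w \<in> interior C"
  proof -
    obtain d where d: "0 < d" "\<And>s. dist s 0 < d \<Longrightarrow> y + s *\<^sub>R w \<in> interior C"
      using eventually_line_in_open[OF open_interior y, of w] by (auto simp: eventually_nhds_metric)
    then show ?thesis
      using d(2)[of "d / 2"] d(2)[of "- (d / 2)"] by (intro that[of "d / 2"]) auto
  qed
  let ?B = "\<lambda>b. \<bar>F b (y + s *\<^sub>R w) - F b y\<bar> / s + \<bar>F b (y - s *\<^sub>R w) - F b y\<bar> / s"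
  have "integrable M ?B"
    using F_mean y s by auto
  then show ?thesis
  proof (rule Bochner_Integration.integrable_bound)
    show "AE b in M. norm (inner (grad (F b) y) w) \<le> norm (?B b)"
    proof (rule AE_I2)
      fix b assume b: "b \<in> space M"
      have "s * inner (grad (F b) y) w \<le> F b (y + s *\<^sub>R w) - F b y"
        and "- s * inner (grad (F b) y) w \<le> F b (y - s *\<^sub>R w) - F b y"
        using inner_grad_F_le_diff[OF b y(1), of s w] inner_grad_F_le_diff[OF b y(1), of "- s" w] s
        by auto
      moreover note abs_ge_self[of "F b (y + s *\<^sub>R w) - F b y"] abs_ge_self[of "F b (y - s *\<^sub>R w) - F b y"]
      ultimately show "norm (inner (grad (F b) y) w) \<le> norm (?B b)"
        using s(1) by (simp add: abs_le_iff field_simps) linarith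
    qed
  qed measurable
qed

lemma inner_grad_le_expectation:
  assumes y: "y \<in> interior C"
  shows "inner (grad f y) w \<le> (\<integral>b. inner (grad (F b) y) w \<partial>M)"
proof -
  have "((\<lambda>t. (f (y + t *\<^sub>R (- w)) - f y) / t) \<longlongrightarrow> inner (grad f y) (- w)) (at_right 0)"
    using grad_directional_tendsto f_diff y by blast
  then have lim: "((\<lambda>t. (f y - f (y - t *\<^sub>R w)) / t) \<longlongrightarrow> inner (grad f y) w) (at_right 0)"
    by (auto dest: tendsto_minus simp: minus_divide_left)
  have "eventually (\<lambda>t. y + (- t) *\<^sub>R w \<in> interior C) (at_right 0)"
    using eventually_line_in_open[OF open_interior y, of "- w"]
    by (auto intro: filter_leD[OF at_within_le_nhds])
  moreover have "eventually (\<lambda>t. 0 < t) (at_right (0::real))"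
    by (simp add: eventually_at_right_less)
  ultimately have "eventually (\<lambda>t. (f y - f (y - t *\<^sub>R w)) / t \<le> (\<integral>b. inner (grad (F b) y) w \<partial>M)) (at_right 0)"
  proof eventually_elim
    case (elim t)
    then have yt: "y - t *\<^sub>R w \<in> interior C"
      by simp
    have "(f y - f (y - t *\<^sub>R w)) / t = (\<integral>b. (F b y - F b (y - t *\<^sub>R w)) / t \<partial>M)"
      using F_mean y yt by (simp add: Bochner_Integration.integral_diff)
    also have "\<dots> \<le> (\<integral>b. inner (grad (F b) y) w \<partial>M)"
    proof (rule integral_mono)
      show "integrable M (\<lambda>b. (F b y - F b (y - t *\<^sub>R w)) / t)"
        using F_mean y yt by auto
      show "integrable M (\<lambda>b. inner (grad (F b) y) w)"
        by (rule integrable_inner_grad_F[OF y])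
      fix b assume "b \<in> space M"
      from inner_grad_F_le_diff[OF this y, of "- t" w] yt elim
      show "(F b y - F b (y - t *\<^sub>R w)) / t \<le> inner (grad (F b) y) w"
        by (simp add: divide_le_eq mult.commute)
    qed
    finally show ?case .
  qed
  then show ?thesis
    by (intro tendsto_upperbound[OF lim]) simp_all
qed

lemma expectation_inner_grad_F:
  assumes y: "y \<in> interior C"
  shows "(\<integral>b. inner (grad (F b) y) w \<partial>M) = inner (grad f y) w"
  using inner_grad_le_expectation[OF y, of w] inner_grad_le_expectation[OF y, of "- w"] by simp

lemma bregman_f_nonneg: "x \<in> interior C \<Longrightarrow> 0 \<le> bregman f xs x"
  using bregman_nonneg[OF f_convex xs(1)] f_diff by blast

lemma expectation_bregman_F:
  assumes x: "x \<in> interior C"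
  defines "R \<equiv> \<lambda>b. bregman (F b) xs x + inner (grad (F b) xs) (x - xs)"
  shows "integrable M R" "(\<integral>b. R b \<partial>M) = bregman f xs x"
proof -
  have R: "R = (\<lambda>b. F b xs - F b x - inner (grad (F b) x) (xs - x) + inner (grad (F b) xs) (x - xs))"
    by (simp add: R_def bregman_def fun_eq_iff)
  show "integrable M R"
    unfolding R using F_mean x xs integrable_inner_grad_F[OF x] integrable_inner_grad_F[OF xs(1)] by auto
  then show "(\<integral>b. R b \<partial>M) = bregman f xs x"
    unfolding R using F_mean x xs integrable_inner_grad_F[OF x] integrable_inner_grad_F[OF xs(1)]
    by (simp add: bregman_def expectation_inner_grad_F)
qed

lemma measurable_bregman_fin_h_mirror:
  "(\<lambda>v. bregman (fin h) xs (mirror v)) \<in> borel_measurable borel"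
proof -
  have eq: "(\<lambda>v. bregman (fin h) xs (mirror v)) = (\<lambda>v. fin h xs - fin h (mirror v) - inner v (xs - mirror v))"
    by (simp add: fun_eq_iff bregman_def grad_fin_h_mirror)
  have "continuous_on UNIV (\<lambda>v. fin h (mirror v))"
    using continuous_on_compose2[OF continuous_on_fin_h continuous_mirror] mirror_in_interior by blast
  then show ?thesis
    unfolding eq using continuous_mirror
    by (intro borel_measurable_continuous_onI continuous_intros) auto
qed

lemma measurable_bregman_hconj: "(\<lambda>v. bregman hconj v y) \<in> borel_measurable borel"
  unfolding bregman_def using continuous_hconj
  by (intro borel_measurable_continuous_onI) (auto intro!: continuous_intros)

lemma expected_mirror_step:
  assumes x: "x \<in> interior C"
  shows "(\<integral>\<^sup>+b. bregman (fin h) xs (mirror (grad (fin h) x - \<eta> *\<^sub>R grad (F b) x)) \<partial>M)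
           + ennreal (\<eta> * bregman f xs x)
         \<le> ennreal (bregman (fin h) xs x)
           + ennreal (1/2) * (\<integral>\<^sup>+b. bregman hconj (grad (fin h) x - (2 * \<eta>) *\<^sub>R grad (F b) xs) (grad (fin h) x) \<partial>M)"
proof -
  define R where "R = (\<lambda>b. \<eta> * (bregman (F b) xs x + inner (grad (F b) xs) (x - xs)))"
  have R: "integrable M R" "(\<integral>b. R b \<partial>M) = \<eta> * bregman f xs x"
    using expectation_bregman_F[OF x] \<eta> by (simp_all add: R_def)
  have "(\<integral>\<^sup>+b. bregman (fin h) xs (mirror (grad (fin h) x - \<eta> *\<^sub>R grad (F b) x)) \<partial>M)
           + ennreal (\<integral>b. R b \<partial>M)
         \<le> ennreal (bregman (fin h) xs x)
           + ennreal (1/2) * (\<integral>\<^sup>+b. bregman hconj (grad (fin h) x - (2 * \<eta>) *\<^sub>R grad (F b) xs) (grad (fin h) x) \<partial>M)"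
  proof (rule M.nn_integral_plus_le_of_pointwise)
    show "(\<lambda>b. bregman (fin h) xs (mirror (grad (fin h) x - \<eta> *\<^sub>R grad (F b) x))) \<in> borel_measurable M"
      by (rule measurable_compose[OF _ measurable_bregman_fin_h_mirror]) measurable
    show "(\<lambda>b. bregman hconj (grad (fin h) x - (2 * \<eta>) *\<^sub>R grad (F b) xs) (grad (fin h) x)) \<in> borel_measurable M"
      by (rule measurable_compose[OF _ measurable_bregman_hconj]) measurable
    show "0 \<le> bregman (fin h) xs (mirror (grad (fin h) x - \<eta> *\<^sub>R grad (F b) x))" for b
      by (rule bregman_fin_h_nonneg[OF xs(1) mirror_in_interior])
    show "0 \<le> bregman hconj (grad (fin h) x - (2 * \<eta>) *\<^sub>R grad (F b) xs) (grad (fin h) x)" for b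
      unfolding bregman_hconj_eq[OF x] by (rule bregman_fin_h_nonneg[OF x mirror_in_interior])
    show "0 \<le> (\<integral>b. R b \<partial>M)"
      unfolding R(2) using bregman_f_nonneg[OF x] \<eta> by simp
    show "0 \<le> bregman (fin h) xs x"
      by (rule bregman_fin_h_nonneg[OF xs(1) x])
    fix b assume "b \<in> space M"
    then show "bregman (fin h) xs (mirror (grad (fin h) x - \<eta> *\<^sub>R grad (F b) x))
        \<le> bregman (fin h) xs x - R b
          + 1/2 * bregman hconj (grad (fin h) x - (2 * \<eta>) *\<^sub>R grad (F b) xs) (grad (fin h) x)"
      using mirror_step_descent[of "F b" L \<eta> x xs] F_convex F_diff F_smooth \<eta> x xs
      by (simp add: R_def algebra_simps)
  qed (use R in simp_all)
  then show ?thesis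
    unfolding R(2) .
qed

lemma bsgd_Suc_mirror:
  "bsgd C h \<eta> F x0 s (Suc t)
     = mirror (grad (fin h) (bsgd C h \<eta> F x0 s t) - \<eta> *\<^sub>R grad (F (s t)) (bsgd C h \<eta> F x0 s t))"
  by (simp add: bsgd_step_eq_mirror)

lemma bsgd_in_interior: "bsgd C h \<eta> F x0 s t \<in> interior C"
  by (cases t) (simp_all only: bsgd.simps(1) bsgd_Suc_mirror x0 mirror_in_interior)

lemma bsgd_prefix_eq: "(\<And>i. i < t \<Longrightarrow> s i = s' i) \<Longrightarrow> bsgd C h \<eta> F x0 s t = bsgd C h \<eta> F x0 s' t"
  by (induction t) (simp_all add: bsgd_Suc_mirror)

lemma measurable_bsgd: "(\<lambda>s. bsgd C h \<eta> F x0 s t) \<in> borel_measurable (PiM {..<t} (\<lambda>_. M))"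
proof (induction t)
  case (Suc t)
  let ?N = "PiM {..<Suc t} (\<lambda>_. M)" and ?x = "\<lambda>s. bsgd C h \<eta> F x0 s t"
  have "(\<lambda>s. ?x (restrict s {..<t})) \<in> borel_measurable ?N"
    by (rule measurable_compose[OF measurable_restrict_subset Suc.IH]) auto
  then have x: "?x \<in> borel_measurable ?N"
    by (rule measurable_cong[THEN iffD1, rotated]) (rule bsgd_prefix_eq, simp)
  have sample: "(\<lambda>s. s t) \<in> measurable ?N M"
    by (rule measurable_component_singleton) simp
  have "(\<lambda>s. grad (F (s t)) (?x s)) \<in> borel_measurable ?N"
    using measurable_compose[OF measurable_Pair[OF sample x] F_meas] by simp
  moreover have "(\<lambda>s. grad (fin h) (?x s)) \<in> borel_measurable ?N"
    using open_interior continuous_on_grad_fin_h x bsgd_in_interior by (rule measurable_continuous_on_comp_open)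
  ultimately show ?case
    unfolding bsgd_Suc_mirror
    by (intro borel_measurable_continuous_on[OF continuous_mirror] borel_measurable_diff borel_measurable_scaleR borel_measurable_const)
qed simp

lemma measurable_bregman_fin_h:
  assumes "X \<in> borel_measurable N" "\<And>\<omega>. \<omega> \<in> space N \<Longrightarrow> X \<omega> \<in> interior C"
  shows "(\<lambda>\<omega>. bregman (fin h) xs (X \<omega>)) \<in> borel_measurable N"
proof (rule measurable_continuous_on_comp_open[OF open_interior _ assms])
  show "continuous_on (interior C) (bregman (fin h) xs)"
    unfolding bregman_def using continuous_on_fin_h continuous_on_grad_fin_h
    by (intro continuous_intros) auto
qed

(* grad f need not be continuous; its inner products are expectations of the measurable grad F. *)
lemma measurable_bregman_f:
  assumes X: "X \<in> borel_measurable N" and int: "\<And>\<omega>. \<omega> \<in> space N \<Longrightarrow> X \<omega> \<in> interior C"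
  shows "(\<lambda>\<omega>. bregman f xs (X \<omega>)) \<in> borel_measurable N"
proof -
  have "continuous_on (interior C) f"
    using f_diff by (metis differentiable_imp_continuous_within continuous_at_imp_continuous_on at_within_open open_interior)
  then have "(\<lambda>\<omega>. f (X \<omega>)) \<in> borel_measurable N"
    using measurable_continuous_on_comp_open[OF open_interior _ X int] by blast
  moreover have "(\<lambda>x. \<integral>b. inner (grad (F b) x) (xs - x) \<partial>M) \<in> borel_measurable borel"
  proof -
    have "(\<lambda>p. (snd p, fst p)) \<in> measurable (borel \<Otimes>\<^sub>M M) (M \<Otimes>\<^sub>M borel)"
      by measurable
    from measurable_compose[OF this F_meas]
    have "(\<lambda>p. grad (F (snd p)) (fst p)) \<in> borel_measurable (borel \<Otimes>\<^sub>M M)"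
      by simp
    then have "(\<lambda>p. inner (grad (F (snd p)) (fst p)) (xs - fst p)) \<in> borel_measurable (borel \<Otimes>\<^sub>M M)"
      by measurable
    then show ?thesis
      by (intro M.borel_measurable_lebesgue_integral) (simp add: case_prod_beta)
  qed
  ultimately have "(\<lambda>\<omega>. f xs - f (X \<omega>) - (\<integral>b. inner (grad (F b) (X \<omega>)) (xs - X \<omega>) \<partial>M)) \<in> borel_measurable N"
    using X by measurable
  then show ?thesis
    by (rule measurable_cong[THEN iffD1, rotated]) (simp add: bregman_def expectation_inner_grad_F int)
qed

end

locale bsgd_sampling = bsgd_setting C h M F f xs x0 L \<eta> + P: prob_space P
  for C :: "'a::euclidean_space set" and h M F f xs x0 L \<eta> and P :: "'w measure" +
  fixes \<xi> :: "nat \<Rightarrow> 'w \<Rightarrow> 'b"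
  assumes \<xi>_meas: "\<forall>t. \<xi> t \<in> measurable P M"
    and \<xi>_distr: "\<forall>t. distr P M (\<xi> t) = M"
    and \<xi>_indep: "prob_space.indep_vars P (\<lambda>_. M) \<xi> UNIV"
begin

abbreviation iterate :: "nat \<Rightarrow> 'w \<Rightarrow> 'a" where
  "iterate t \<omega> \<equiv> bsgd C h \<eta> F x0 (\<lambda>s. \<xi> s \<omega>) t"

lemma iterate_eq_prefix: "iterate t \<omega> = bsgd C h \<eta> F x0 (\<lambda>i\<in>{..<t}. \<xi> i \<omega>) t"
  by (rule bsgd_prefix_eq) simp

lemma measurable_iterate: "iterate t \<in> borel_measurable P"
proof -
  have "(\<lambda>\<omega>. \<lambda>i\<in>{..<t}. \<xi> i \<omega>) \<in> measurable P (PiM {..<t} (\<lambda>_. M))"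
    by (rule measurable_restrict) (use \<xi>_meas in auto)
  from measurable_compose[OF this measurable_bsgd] show ?thesis
    unfolding iterate_eq_prefix[abs_def] .
qed

lemma expected_descent:
  assumes noise: "AE \<omega> in P.
        (\<integral>\<^sup>+ b. ennreal (bregman (\<lambda>y. real_of_ereal (conj h y))
              (grad (fin h) (iterate t \<omega>) - (2 * \<eta>) *\<^sub>R grad (F b) xs)
              (grad (fin h) (iterate t \<omega>))) \<partial>M)
        \<le> ennreal (2 * \<eta>\<^sup>2 * \<sigma>2)"
    and \<sigma>2: "0 \<le> \<sigma>2"
  shows "(\<integral>\<^sup>+\<omega>. bregman (fin h) xs (iterate (Suc t) \<omega>) \<partial>P) + (\<integral>\<^sup>+\<omega>. \<eta> * bregman f xs (iterate t \<omega>) \<partial>P)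
       \<le> (\<integral>\<^sup>+\<omega>. bregman (fin h) xs (iterate t \<omega>) \<partial>P) + ennreal (\<eta>\<^sup>2 * \<sigma>2)"
proof -
  let ?M\<^sub>t = "PiM {..<t} (\<lambda>_. M)" and ?x = "\<lambda>s. bsgd C h \<eta> F x0 s t"
  define K where "K p = ennreal (bregman (fin h) xs (mirror (grad (fin h) (?x (fst p)) - \<eta> *\<^sub>R grad (F (snd p)) (?x (fst p)))))" for p
  have K: "K \<in> borel_measurable (?M\<^sub>t \<Otimes>\<^sub>M M)"
  proof -
    have x: "(\<lambda>p. ?x (fst p)) \<in> borel_measurable (?M\<^sub>t \<Otimes>\<^sub>M M)"
      by (rule measurable_compose[OF measurable_fst measurable_bsgd])
    have "(\<lambda>p. grad (F (snd p)) (?x (fst p))) \<in> borel_measurable (?M\<^sub>t \<Otimes>\<^sub>M M)"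
      using measurable_compose[OF measurable_Pair[OF measurable_snd x] F_meas] by simp
    moreover have "(\<lambda>p. grad (fin h) (?x (fst p))) \<in> borel_measurable (?M\<^sub>t \<Otimes>\<^sub>M M)"
      using open_interior continuous_on_grad_fin_h x bsgd_in_interior by (rule measurable_continuous_on_comp_open)
    ultimately have "(\<lambda>p. grad (fin h) (?x (fst p)) - \<eta> *\<^sub>R grad (F (snd p)) (?x (fst p)))
        \<in> borel_measurable (?M\<^sub>t \<Otimes>\<^sub>M M)"
      by measurable
    from measurable_compose[OF this measurable_bregman_fin_h_mirror] show ?thesis
      unfolding K_def by measurable
  qed
  define G where "G \<omega> = (\<integral>\<^sup>+b. K (\<lambda>i\<in>{..<t}. \<xi> i \<omega>, b) \<partial>M)" for \<omega>
  have G: "G \<in> borel_measurable P"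
  proof -
    have "(\<lambda>\<omega>. \<lambda>i\<in>{..<t}. \<xi> i \<omega>) \<in> measurable P ?M\<^sub>t"
      by (rule measurable_restrict) (use \<xi>_meas in auto)
    from measurable_compose[OF this M.borel_measurable_nn_integral_fst[OF K]] show ?thesis
      by (simp add: G_def[abs_def])
  qed
  have "(\<integral>\<^sup>+\<omega>. bregman (fin h) xs (iterate (Suc t) \<omega>) \<partial>P) = (\<integral>\<^sup>+\<omega>. K (\<lambda>i\<in>{..<t}. \<xi> i \<omega>, \<xi> t \<omega>) \<partial>P)"
    by (simp add: K_def bsgd_step_eq_mirror flip: iterate_eq_prefix)
  also have "\<dots> = (\<integral>\<^sup>+\<omega>. G \<omega> \<partial>P)"
    unfolding G_def using \<xi>_meas \<xi>_distr \<xi>_indep K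
    by (intro P.nn_integral_next_sample) (auto intro: M.prob_space_axioms)
  finally have "(\<integral>\<^sup>+\<omega>. bregman (fin h) xs (iterate (Suc t) \<omega>) \<partial>P) + (\<integral>\<^sup>+\<omega>. \<eta> * bregman f xs (iterate t \<omega>) \<partial>P)
      = (\<integral>\<^sup>+\<omega>. G \<omega> + ennreal (\<eta> * bregman f xs (iterate t \<omega>)) \<partial>P)"
    using G measurable_bregman_f[OF measurable_iterate bsgd_in_interior] by (simp add: nn_integral_add)
  also have "\<dots> \<le> (\<integral>\<^sup>+\<omega>. ennreal (bregman (fin h) xs (iterate t \<omega>)) + ennreal (\<eta>\<^sup>2 * \<sigma>2) \<partial>P)"
  proof (rule nn_integral_mono_AE)
    show "AE \<omega> in P. G \<omega> + ennreal (\<eta> * bregman f xs (iterate t \<omega>))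
        \<le> ennreal (bregman (fin h) xs (iterate t \<omega>)) + ennreal (\<eta>\<^sup>2 * \<sigma>2)"
      using noise
    proof eventually_elim
      case (elim \<omega>)
      let ?x = "iterate t \<omega>"
      have "G \<omega> + ennreal (\<eta> * bregman f xs ?x)
          \<le> ennreal (bregman (fin h) xs ?x)
            + ennreal (1/2) * (\<integral>\<^sup>+b. bregman hconj (grad (fin h) ?x - (2 * \<eta>) *\<^sub>R grad (F b) xs) (grad (fin h) ?x) \<partial>M)"
        using expected_mirror_step[OF bsgd_in_interior] by (simp add: G_def K_def flip: iterate_eq_prefix)
      also have "\<dots> \<le> ennreal (bregman (fin h) xs ?x) + ennreal (1/2) * ennreal (2 * \<eta>\<^sup>2 * \<sigma>2)"
        using elim unfolding conj_h_eq_hconj by (intro add_left_mono mult_left_mono) auto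
      also have "\<dots> = ennreal (bregman (fin h) xs ?x) + ennreal (\<eta>\<^sup>2 * \<sigma>2)"
        using \<sigma>2 by (subst ennreal_mult[symmetric]) auto
      finally show ?case .
    qed
  qed
  also have "\<dots> = (\<integral>\<^sup>+\<omega>. bregman (fin h) xs (iterate t \<omega>) \<partial>P) + ennreal (\<eta>\<^sup>2 * \<sigma>2)"
    using measurable_bregman_fin_h[OF measurable_iterate bsgd_in_interior]
    by (simp add: nn_integral_add P.emeasure_space_1)
  finally show ?thesis .
qed

(* The sum includes t = T; that last term is bounded by D_h via relative smoothness. *)
lemma sum_expected_gap_le:
  assumes noise: "\<forall>t. AE \<omega> in P.
        (\<integral>\<^sup>+ b. ennreal (bregman (\<lambda>y. real_of_ereal (conj h y))
              (grad (fin h) (iterate t \<omega>) - (2 * \<eta>) *\<^sub>R grad (F b) xs)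
              (grad (fin h) (iterate t \<omega>))) \<partial>M)
        \<le> ennreal (2 * \<eta>\<^sup>2 * \<sigma>2)"
    and \<sigma>2: "0 \<le> \<sigma>2"
  shows "(\<Sum>t\<in>{0..T}. \<integral>\<^sup>+\<omega>. \<eta> * bregman f xs (iterate t \<omega>) \<partial>P)
       \<le> ennreal (bregman (fin h) xs x0) + of_nat T * ennreal (\<eta>\<^sup>2 * \<sigma>2)"
proof -
  define a where "a t = (\<integral>\<^sup>+\<omega>. bregman (fin h) xs (iterate t \<omega>) \<partial>P)" for t
  define c where "c t = (\<integral>\<^sup>+\<omega>. \<eta> * bregman f xs (iterate t \<omega>) \<partial>P)" for t
  have "c T \<le> a T"
    unfolding a_def c_def
  proof (intro nn_integral_mono ennreal_leI)
    fix \<omega>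
    have "bregman f xs (iterate T \<omega>) \<le> L * bregman (fin h) xs (iterate T \<omega>)"
      using f_smooth xs(1) bsgd_in_interior unfolding rel_smooth_def by blast
    moreover have "0 \<le> bregman (fin h) xs (iterate T \<omega>)"
      by (rule bregman_fin_h_nonneg[OF xs(1) bsgd_in_interior])
    ultimately have "\<eta> * bregman f xs (iterate T \<omega>) \<le> (\<eta> * L) * bregman (fin h) xs (iterate T \<omega>)"
      using \<eta>(1) mult_left_mono by (fastforce simp: mult.assoc)
    also have "\<dots> \<le> bregman (fin h) xs (iterate T \<omega>)"
      using \<eta> \<open>0 \<le> bregman (fin h) xs (iterate T \<omega>)\<close> mult_right_mono[of "\<eta> * L" 1] by fastforce
    finally show "\<eta> * bregman f xs (iterate T \<omega>) \<le> bregman (fin h) xs (iterate T \<omega>)" .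
  qed
  moreover have "{0..T} = insert T {..<T}"
    by auto
  ultimately have "(\<Sum>t\<in>{0..T}. c t) \<le> a T + (\<Sum>t<T. c t)"
    by (simp add: add_right_mono)
  also have "\<dots> \<le> a 0 + of_nat T * ennreal (\<eta>\<^sup>2 * \<sigma>2)"
    using expected_descent[OF noise[rule_format] \<sigma>2] by (intro telescoping_ennreal) (simp add: a_def c_def)
  finally show ?thesis
    using P.emeasure_space_1 by (simp add: a_def c_def)
qed


lemma expected_average_gap_le:
  assumes noise: "\<forall>t. AE \<omega> in P.
        (\<integral>\<^sup>+ b. ennreal (bregman (\<lambda>y. real_of_ereal (conj h y))
              (grad (fin h) (iterate t \<omega>) - (2 * \<eta>) *\<^sub>R grad (F b) xs)
              (grad (fin h) (iterate t \<omega>))) \<partial>M)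
        \<le> ennreal (2 * \<eta>\<^sup>2 * \<sigma>2)"
    and \<sigma>2: "0 \<le> \<sigma>2" and T: "1 \<le> T"
  shows "(\<integral>\<^sup>+\<omega>. ennreal ((1 / real T) * (\<Sum>t\<in>{0..T}. bregman f xs (iterate t \<omega>))) \<partial>P)
       \<le> ennreal (bregman (fin h) xs x0 / (\<eta> * real T) + \<eta> * \<sigma>2)"
proof -
  have T_pos: "0 < real T"
    using T by simp
  have gap_nonneg: "0 \<le> bregman f xs (iterate t \<omega>)" for t \<omega>
    by (rule bregman_f_nonneg[OF bsgd_in_interior])
  have "ennreal ((1 / real T) * (\<Sum>t\<in>{0..T}. bregman f xs (iterate t \<omega>)))
      = ennreal (1 / (\<eta> * real T)) * (\<Sum>t\<in>{0..T}. ennreal (\<eta> * bregman f xs (iterate t \<omega>)))" for \<omega>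
    using \<eta> T_pos gap_nonneg
    by (simp add: sum_ennreal sum_distrib_left[symmetric] ennreal_mult[symmetric] sum_nonneg)
  then have "(\<integral>\<^sup>+\<omega>. ennreal ((1 / real T) * (\<Sum>t\<in>{0..T}. bregman f xs (iterate t \<omega>))) \<partial>P)
      = ennreal (1 / (\<eta> * real T)) * (\<Sum>t\<in>{0..T}. \<integral>\<^sup>+\<omega>. \<eta> * bregman f xs (iterate t \<omega>) \<partial>P)"
    using measurable_bregman_f[OF measurable_iterate bsgd_in_interior]
    by (simp add: nn_integral_cmult nn_integral_sum)
  also have "\<dots> \<le> ennreal (1 / (\<eta> * real T)) * (ennreal (bregman (fin h) xs x0) + of_nat T * ennreal (\<eta>\<^sup>2 * \<sigma>2))"
    by (intro mult_left_mono sum_expected_gap_le noise \<sigma>2) simp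
  also have "\<dots> = ennreal (1 / (\<eta> * real T) * (bregman (fin h) xs x0 + real T * (\<eta>\<^sup>2 * \<sigma>2)))"
  proof -
    have e1: "of_nat T * ennreal (\<eta>\<^sup>2 * \<sigma>2) = ennreal (real T * (\<eta>\<^sup>2 * \<sigma>2))"
      using \<sigma>2 by (simp add: ennreal_of_nat_eq_real_of_nat ennreal_mult)
    have e2: "ennreal (bregman (fin h) xs x0) + ennreal (real T * (\<eta>\<^sup>2 * \<sigma>2))
        = ennreal (bregman (fin h) xs x0 + real T * (\<eta>\<^sup>2 * \<sigma>2))"
      using \<sigma>2 bregman_fin_h_nonneg[OF xs(1) x0] by (intro ennreal_plus[symmetric]) auto
    show ?thesis
      unfolding e1 e2 using \<sigma>2 \<eta> T_pos bregman_fin_h_nonneg[OF xs(1) x0]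
      by (intro ennreal_mult[symmetric]) auto
  qed
  also have "\<dots> = ennreal (bregman (fin h) xs x0 / (\<eta> * real T) + \<eta> * \<sigma>2)"
    using \<eta> T_pos by (simp add: field_simps power2_eq_square)
  finally show ?thesis .
qed

end

theorem theorem2:
  fixes C :: "'a::euclidean_space set"
    and h :: "'a \<Rightarrow> ereal"
    and P :: "'w measure" and M :: "'b measure"
    and \<xi> :: "nat \<Rightarrow> 'w \<Rightarrow> 'b"
    and F :: "'b \<Rightarrow> 'a \<Rightarrow> real" and f :: "'a \<Rightarrow> real"
    and x0 xs :: 'a and \<eta> L \<sigma>2 :: real and T :: nat
  assumes C: "closed C" "convex C"
    \<comment> \<open>standing assumption on h\<close>
    and h_ninf: "\<forall>x. h x \<noteq> -\<infinity>"
    and h_dom: "\<forall>x. x \<notin> C \<longrightarrow> h x = \<infinity>"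
    and h_fin: "\<forall>x\<in>interior C. h x \<noteq> \<infinity>"
    and h_C1: "\<forall>x\<in>interior C. fin h differentiable (at x)"
    and h_C2: "\<exists>H :: 'a \<Rightarrow> 'a \<Rightarrow>\<^sub>L 'a. (\<forall>x\<in>interior C.
                 (grad (fin h) has_derivative blinfun_apply (H x)) (at x))
               \<and> continuous_on (interior C) H"
    and h_strict: "strict_convex_on (interior C) (fin h)"
    and h_argmin: "\<forall>y. \<exists>!x. x \<in> C \<and> (\<forall>z\<in>C. h x - ereal (inner x y) \<le> h z - ereal (inner z y))"
    and h_argmin_int: "\<forall>y x. x \<in> C \<and> (\<forall>z\<in>C. h x - ereal (inner x y) \<le> h z - ereal (inner z y))
                              \<longrightarrow> x \<in> interior C"
    \<comment> \<open>probabilistic setting: xi_t i.i.d. with distribution M\<close>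
    and P: "prob_space P" and M: "prob_space M"
    and \<xi>_meas: "\<forall>t. \<xi> t \<in> measurable P M"
    and \<xi>_distr: "\<forall>t. distr P M (\<xi> t) = M"
    and \<xi>_indep: "prob_space.indep_vars P (\<lambda>_. M) \<xi> UNIV"
    and F_meas: "(\<lambda>p. grad (F (fst p)) (snd p)) \<in> borel_measurable (M \<Otimes>\<^sub>M borel)"
    \<comment> \<open>noise assumption\<close>
    and F_diff: "\<forall>b\<in>space M. \<forall>x\<in>interior C. F b differentiable (at x)"
    and F_convex: "\<forall>b\<in>space M. convex_on (interior C) (F b)"
    and F_smooth: "\<forall>b\<in>space M. rel_smooth (F b) (fin h) L (interior C)"
    and F_mean: "\<forall>x\<in>interior C. integrable M (\<lambda>b. F b x) \<and> f x = (\<integral>b. F b x \<partial>M)"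
    and noise: "\<forall>t. AE \<omega> in P.
        (\<integral>\<^sup>+ b. ennreal (bregman (\<lambda>y. real_of_ereal (conj h y))
              (grad (fin h) (bsgd C h \<eta> F x0 (\<lambda>s. \<xi> s \<omega>) t) - (2 * \<eta>) *\<^sub>R grad (F b) xs)
              (grad (fin h) (bsgd C h \<eta> F x0 (\<lambda>s. \<xi> s \<omega>) t))) \<partial>M)
        \<le> ennreal (2 * \<eta>\<^sup>2 * \<sigma>2)"
    and \<sigma>2: "\<sigma>2 \<ge> 0"
    \<comment> \<open>assumptions on f\<close>
    and f_diff: "\<forall>x\<in>interior C. f differentiable (at x)"
    and f_convex: "convex_on (interior C) f"
    and f_smooth: "rel_smooth f (fin h) L (interior C)"
    and L: "L \<ge> 0"
    and xs: "xs \<in> interior C" "\<forall>x\<in>interior C. f xs \<le> f x" "grad f xs = 0"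
    \<comment> \<open>algorithm parameters\<close>
    and x0: "x0 \<in> interior C"
    and \<eta>: "\<eta> > 0" "2 * \<eta> * L \<le> 1"
    and T: "T \<ge> 1"
  shows "(\<integral>\<^sup>+ \<omega>. ennreal ((1 / real T) *
            (\<Sum>t\<in>{0..T}. bregman f xs (bsgd C h \<eta> F x0 (\<lambda>s. \<xi> s \<omega>) t))) \<partial>P)
         \<le> ennreal (bregman (fin h) xs x0 / (\<eta> * real T) + \<eta> * \<sigma>2)"
proof -
  interpret bsgd_sampling C h M F f xs x0 L \<eta> P \<xi>
    using assms
    by (intro bsgd_sampling.intro bsgd_setting.intro legendre_mirror.intro bsgd_setting_axioms.intro
        bsgd_sampling_axioms.intro) assumption+
  show ?thesis
    using expected_average_gap_le[OF noise \<sigma>2 T] .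
qed

end
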